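(* Let $n\ge 6$ be even, and let $d_*=(\epsilon_1,\dots,\epsilon_{n-1},h)$ and $d_*'=(\epsilon_1',\dots,\epsilon_{n-1}',h')$ be neighbors. Then there is no index $j\in[1,n-1]$ with $\epsilon_j=1$ and $\epsilon'_j=-1$, nor with $\epsilon_j=-1$ and $\epsilon'_j=1$.
   Context: Symbols are $[1,n]$; $\mathrm{dist}(a,b)$ is the minimum of the residues of $a-b$ and $b-a$ mod $n$ (in $[0,n-1]$). A Latin row is a permutation $(s_1,\dots,s_n)$ of $[1,n]$; its inner distance is $\min_j\mathrm{dist}(s_j,s_{j+1})$. Its extended difference row is $(\epsilon_1,\dots,\epsilon_{n-1},h)$ where, with $h_j\in[0,n-1]$, $h_j\equiv s_{j+1}-s_j\pmod n$ ($1\le j\le n-1$), $h_n\equiv s_1-s_n\pmod n$, $\epsilon_j=h_j-\frac n2$, $h=h_n-\frac n2$ (integers); for rows of inner distance $\frac n2-1$ each $\epsilon_j\in\{-1,0,1\}$. A Latin rectangle is a matrix over $[1,n]$ with no repeats in any row or column; its inner distance is the minimum of $\mathrm{dist}$ over symbols in horizontally or vertically adjacent cells. Two extended difference rows of Latin rows of inner distance $\frac n2-1$ are neighbors if there exist Latin rows $r,r'$ with these extended difference rows such that the $2\times n$ matrix with rows $r$ and $r'$ is a Latin rectangle of inner distance $\frac n2-1$. *)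

theory Defs
  imports Main
begin

text \<open>Symbols are the integers 1..n. Rows are int lists of length n; list position k
  (0-based) holds the entry s_(k+1) of the paper.\<close>

definition cdist :: "nat \<Rightarrow> int \<Rightarrow> int \<Rightarrow> int" where
  "cdist n a b = min ((a - b) mod int n) ((b - a) mod int n)"

definition latin_row :: "nat \<Rightarrow> int list \<Rightarrow> bool" where
  "latin_row n s \<longleftrightarrow> length s = n \<and> distinct s \<and> set s = {1..int n}"

definition row_inner_dist :: "nat \<Rightarrow> int list \<Rightarrow> int" where
  "row_inner_dist n s = Min {cdist n (s ! j) (s ! Suc j) | j. Suc j < n}"

definition ext_diff_row :: "nat \<Rightarrow> int list \<Rightarrow> int list" where
  "ext_diff_row n s =
     map (\<lambda>j. (s ! Suc j - s ! j) mod int n - int n div 2) [0..<n - 1]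
     @ [(s ! 0 - s ! (n - 1)) mod int n - int n div 2]"

definition latin_rect :: "nat \<Rightarrow> int list list \<Rightarrow> bool" where
  "latin_rect n M \<longleftrightarrow>
     (\<forall>r\<in>set M. length r = n \<and> distinct r \<and> set r \<subseteq> {1..int n}) \<and>
     (\<forall>j<n. distinct (map (\<lambda>r. r ! j) M))"

definition rect_inner_dist :: "nat \<Rightarrow> int list list \<Rightarrow> int" where
  "rect_inner_dist n M = Min
     ({cdist n (M ! i ! j) (M ! i ! Suc j) | i j. i < length M \<and> Suc j < n} \<union>
      {cdist n (M ! i ! j) (M ! Suc i ! j) | i j. Suc i < length M \<and> j < n})"

definition neighbors :: "nat \<Rightarrow> int list \<Rightarrow> int list \<Rightarrow> bool" where
  "neighbors n d d' \<longleftrightarrow>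
     (\<exists>r r'. latin_row n r \<and> latin_row n r' \<and>
        row_inner_dist n r = int n div 2 - 1 \<and> row_inner_dist n r' = int n div 2 - 1 \<and>
        ext_diff_row n r = d \<and> ext_diff_row n r' = d' \<and>
        latin_rect n [r, r'] \<and> rect_inner_dist n [r, r'] = int n div 2 - 1)"

end

theory Submission
  imports Defs
begin

text \<open>Write \<open>n = 2m\<close> and read the rows modulo \<open>n\<close>: inner distance \<open>m - 1\<close> says that
  horizontally and vertically adjacent entries differ by \<open>m - 1\<close>, \<open>m\<close> or \<open>m + 1\<close>.
  Call a position \<open>k\<close> a crossing if the upper row steps by \<open>m + 1\<close> (\<open>\<epsilon> = 1\<close>) and the
  lower one by \<open>m - 1\<close> (\<open>\<epsilon>' = -1\<close>) there. Translating the upper entry at \<open>k\<close> to 0,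
  the vertical constraints force the two rows to swap their entries at \<open>k, k + 1\<close>, and
  distinctness then fixes the neighbouring columns: the rows read \<open>m, 0, m+1, 1\<close> and
  \<open>1, m+1, 0, m\<close>. One more column to the right would have to hold \<open>m + 2\<close> above
  \<open>2m - 1\<close>, which are too close. At the left border \<open>k = 0\<close> either the upper row starts
  with steps \<open>\<epsilon> = 1, 0, 1\<close>, the lower one with \<open>-1, 0, -1\<close>, or there is a crossing of
  the exchanged rows at position 2. A row starting like that is impossible: it would have to
  put its \<open>m - 1\<close> entries at odd positions \<open>\<ge> 3\<close> into the \<open>m - 2\<close> residues
  \<open>m + 2, \<dots>, 2m - 1\<close>. The right border reduces to the left one by reversing both rows,
  and the pattern \<open>\<epsilon> = -1, \<epsilon>' = 1\<close> to \<open>\<epsilon> = 1, \<epsilon>' = -1\<close> by exchanging them.\<close>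

definition near_antipodal :: "int \<Rightarrow> int \<Rightarrow> int \<Rightarrow> bool" where
  "near_antipodal M u v \<longleftrightarrow> M - 1 \<le> \<bar>u - v\<bar> \<and> \<bar>u - v\<bar> \<le> M + 1"

definition step_eps :: "nat \<Rightarrow> (nat \<Rightarrow> int) \<Rightarrow> nat \<Rightarrow> int" where
  "step_eps n p j = (p (Suc j) - p j) mod int n - int n div 2"

lemma cdist_commute: "cdist n a b = cdist n b a"
  unfolding cdist_def by (simp add: min.commute)

lemma cdist_mod_shift: "cdist n a b = cdist n ((a - c) mod int n) ((b - c) mod int n)"
  unfolding cdist_def by (simp add: mod_diff_eq)

lemma cdist_uminus: "cdist n (- a) (- b) = cdist n a b"
  unfolding cdist_def by (simp add: min.commute)

lemma residue_diff_mod: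
  fixes u v N :: int
  assumes "0 \<le> u" "u < N" "0 \<le> v" "v < N"
  shows "(v - u) mod N = (if u \<le> v then v - u else v - u + N)"
proof (cases "u \<le> v")
  case True
  then show ?thesis using assms by simp
next
  case False
  then have "(v - u + N) mod N = v - u + N" using assms by (intro mod_pos_pos_trivial) auto
  then show ?thesis using False by simp
qed

lemma residue_diff_mod_eq_iff:
  fixes u v d N :: int
  assumes "0 \<le> u" "u < N" "0 \<le> v" "v < N" "0 \<le> d" "d < N"
  shows "(v - u) mod N = d \<longleftrightarrow> v - u = d \<or> v - u = d - N"
  using residue_diff_mod[OF assms(1-4)] assms by auto

lemma cdist_residues_ge_iff:
  assumes "0 \<le> u" "u < 2 * int m" "0 \<le> v" "v < 2 * int m"
  shows "int m - 1 \<le> cdist (2 * m) u v \<longleftrightarrow> near_antipodal (int m) u v"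
  using residue_diff_mod[of u "2 * int m" v] residue_diff_mod[of v "2 * int m" u] assms
  unfolding cdist_def near_antipodal_def by (auto simp: abs_if)

lemma uminus_mod_double_sub:
  fixes x :: int
  assumes "x mod (2 * M) \<noteq> 0"
  shows "(- x) mod (2 * M) - M = - (x mod (2 * M) - M)"
  using assms by (simp add: zmod_zminus1_eq_if)

lemma mod_eq_imp_eq_interval:
  fixes x y :: int
  assumes "x mod n = y mod n" "a \<le> x" "x < a + n" "a \<le> y" "y < a + n"
  shows "x = y"
proof (rule ccontr)
  assume "x \<noteq> y"
  moreover have "n dvd x - y" using assms(1) by (simp add: mod_eq_dvd_iff)
  ultimately have "\<bar>n\<bar> \<le> \<bar>x - y\<bar>" by (simp add: dvd_imp_le_int)
  then show False using assms(2-) by linarith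
qed

text \<open>Rows translated into residues in \<open>[0, 2m)\<close>, where the distance condition becomes
  linear (lemma \<open>cdist_residues_ge_iff\<close>).\<close>

locale residue_row =
  fixes n m :: nat and P :: "nat \<Rightarrow> int"
  assumes n_eq: "n = 2 * m" and m_ge: "3 \<le> m"
    and nonneg: "0 \<le> P j" and less: "P j < 2 * int m"
    and inj: "inj_on P {..<n}"
    and far: "Suc j < n \<Longrightarrow> near_antipodal (int m) (P j) (P (Suc j))"
begin

lemma step_eps_eq_iff:
  assumes "- int m \<le> e" "e < int m"
  shows "step_eps n P j = e \<longleftrightarrow> P (Suc j) - P j = int m + e \<or> P (Suc j) - P j = e - int m"
  using residue_diff_mod_eq_iff[of "P j" "2 * int m" "P (Suc j)" "int m + e"] assms
    nonneg less unfolding step_eps_def by (auto simp: n_eq)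

end

locale residue_rows = P: residue_row n m P + Q: residue_row n m Q
  for n m :: nat and P Q :: "nat \<Rightarrow> int" +
  assumes vertical: "j < n \<Longrightarrow> near_antipodal (int m) (P j) (Q j)"
begin

lemma crossing_residues:
  assumes "step_eps n P k = 1" "step_eps n Q k = -1" "P k = 0" "Suc k < n"
  shows "P (Suc k) = int m + 1" "Q k = int m + 1" "Q (Suc k) = 0"
proof -
  have "P (Suc k) - P k = int m + 1" "Q (Suc k) - Q k = int m - 1 \<or> Q (Suc k) - Q k = - int m - 1"
    using P.step_eps_eq_iff[of 1 k] Q.step_eps_eq_iff[of "-1" k] assms(1,2,3)
      P.nonneg[of "Suc k"] P.m_ge by auto
  moreover have "near_antipodal (int m) (P k) (Q k)" "near_antipodal (int m) (P (Suc k)) (Q (Suc k))"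
    using vertical assms(4) by simp_all
  ultimately show "P (Suc k) = int m + 1" "Q k = int m + 1" "Q (Suc k) = 0"
    using assms(3) Q.nonneg[of k] Q.less[of k] Q.nonneg[of "Suc k"] Q.less[of "Suc k"] P.m_ge
    unfolding near_antipodal_def by (auto simp: abs_if split: if_splits)
qed

lemma crossing_residues_right:
  assumes "step_eps n P k = 1" "step_eps n Q k = -1" "P k = 0" "Suc (Suc k) < n"
  shows "P (Suc (Suc k)) = 1" "Q (Suc (Suc k)) = int m"
proof -
  have "Suc k < n" using assms(4) by simp
  note crossing = crossing_residues[OF assms(1-3) this]
  have "P (Suc (Suc k)) \<noteq> P k" "Q (Suc (Suc k)) \<noteq> Q k"
    using inj_onD[OF P.inj, of "Suc (Suc k)" k] inj_onD[OF Q.inj, of "Suc (Suc k)" k] assms(4) by auto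
  moreover have "near_antipodal (int m) (P (Suc k)) (P (Suc (Suc k)))"
    "near_antipodal (int m) (Q (Suc k)) (Q (Suc (Suc k)))"
    "near_antipodal (int m) (P (Suc (Suc k))) (Q (Suc (Suc k)))"
    using P.far Q.far vertical assms(4) by simp_all
  ultimately show "P (Suc (Suc k)) = 1" "Q (Suc (Suc k)) = int m"
    using crossing assms(3) P.nonneg[of "Suc (Suc k)"] P.less[of "Suc (Suc k)"]
      Q.nonneg[of "Suc (Suc k)"] Q.less[of "Suc (Suc k)"] P.m_ge
    unfolding near_antipodal_def by (auto simp: abs_if split: if_splits)
qed

lemma crossing_residues_left:
  assumes "step_eps n P k = 1" "step_eps n Q k = -1" "P k = 0" "Suc k < n" "0 < k"
  shows "P (k - 1) = int m" "Q (k - 1) = 1"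
proof -
  note crossing = crossing_residues[OF assms(1-4)]
  have "k - 1 < n" "k - 1 \<noteq> Suc k" using assms(4) by auto
  then have "P (k - 1) \<noteq> P (Suc k)" "Q (k - 1) \<noteq> Q (Suc k)"
    using inj_onD[OF P.inj, of "k - 1" "Suc k"] inj_onD[OF Q.inj, of "k - 1" "Suc k"] assms(4) by auto
  moreover have "near_antipodal (int m) (P (k - 1)) (P k)"
    "near_antipodal (int m) (Q (k - 1)) (Q k)"
    "near_antipodal (int m) (P (k - 1)) (Q (k - 1))"
    using P.far[of "k - 1"] Q.far[of "k - 1"] vertical[of "k - 1"] assms(4,5) by simp_all
  ultimately show "P (k - 1) = int m" "Q (k - 1) = 1"
    using crossing assms(3) P.nonneg[of "k - 1"] P.less[of "k - 1"]
      Q.nonneg[of "k - 1"] Q.less[of "k - 1"] P.m_ge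
    unfolding near_antipodal_def by (auto simp: abs_if split: if_splits)
qed

lemma crossing_residues_initial:
  assumes "step_eps n P 0 = 1" "step_eps n Q 0 = -1" "P 0 = 0"
  shows "P 1 = int m + 1" "Q 1 = 0" "P 2 = 1" "Q 2 = int m"
    and "P 3 = int m + 2 \<or> Q 3 = 2 * int m - 1 \<or> P 3 = int m \<and> Q 3 = 1"
proof -
  have n_gt: "Suc 0 < n" "Suc (Suc 0) < n" "3 < n" using P.n_eq P.m_ge by simp_all
  show start: "P 1 = int m + 1" "Q 1 = 0" "P 2 = 1" "Q 2 = int m"
    using crossing_residues[OF assms n_gt(1)] crossing_residues_right[OF assms n_gt(2)]
    by (simp_all add: numeral_2_eq_2)
  have "P 3 \<noteq> P 1" "Q 3 \<noteq> Q 1"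
    using inj_onD[OF P.inj, of 3 1] inj_onD[OF Q.inj, of 3 1] n_gt(3) by auto
  moreover have "near_antipodal (int m) (P 2) (P 3)" "near_antipodal (int m) (Q 2) (Q 3)"
    "near_antipodal (int m) (P 3) (Q 3)"
    using P.far[of 2] Q.far[of 2] vertical[of 3] n_gt(3) by (simp_all add: numeral_3_eq_3)
  ultimately show "P 3 = int m + 2 \<or> Q 3 = 2 * int m - 1 \<or> P 3 = int m \<and> Q 3 = 1"
    using start P.nonneg[of 3] P.less[of 3] Q.nonneg[of 3] Q.less[of 3] P.m_ge
    unfolding near_antipodal_def by (auto simp: abs_if split: if_splits)
qed

end

locale far_row =
  fixes n m :: nat and p :: "nat \<Rightarrow> int"
  assumes n_eq: "n = 2 * m" and m_ge: "3 \<le> m"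
    and residues_inj: "inj_on (\<lambda>j. p j mod int n) {..<n}"
    and step_far: "Suc j < n \<Longrightarrow> int m - 1 \<le> cdist n (p j) (p (Suc j))"
begin

lemma residue_row_shift: "residue_row n m (\<lambda>j. (p j - c) mod int n)"
proof
  show "inj_on (\<lambda>j. (p j - c) mod int n) {..<n}"
  proof (rule inj_onI)
    fix i j assume ij: "i \<in> {..<n}" "j \<in> {..<n}" "(p i - c) mod int n = (p j - c) mod int n"
    then have "(p i - c + c) mod int n = (p j - c + c) mod int n"
      by (intro mod_add_cong) simp_all
    then show "i = j" using inj_onD[OF residues_inj] ij by simp
  qed
  show "near_antipodal (int m) ((p j - c) mod int n) ((p (Suc j) - c) mod int n)" if "Suc j < n" for j
    using step_far[OF that] cdist_mod_shift[of n "p j" "p (Suc j)" c]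
      cdist_residues_ge_iff[of "(p j - c) mod int n" m "(p (Suc j) - c) mod int n"] m_ge
    by (simp add: n_eq)
qed (use n_eq m_ge in simp_all)

lemma step_eps_shift: "step_eps n (\<lambda>j. (p j - c) mod int n) j = step_eps n p j"
  unfolding step_eps_def by (simp add: mod_diff_eq)

lemma step_mod_nonzero: "Suc j < n \<Longrightarrow> (p (Suc j) - p j) mod int n \<noteq> 0"
  using step_far[of j] m_ge unfolding cdist_def by fastforce

lemma far_row_uminus: "far_row n m (\<lambda>j. - p j)"
proof
  show "inj_on (\<lambda>j. - p j mod int n) {..<n}"
  proof (rule inj_onI)
    fix i j assume ij: "i \<in> {..<n}" "j \<in> {..<n}" "- p i mod int n = - p j mod int n"
    then have "p i mod int n = p j mod int n" using mod_minus_cong[of "- p i" "int n" "- p j"] by simp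
    then show "i = j" using inj_onD[OF residues_inj] ij by simp
  qed
qed (use n_eq m_ge step_far in \<open>simp_all add: cdist_uminus\<close>)

lemma step_eps_uminus: "Suc j < n \<Longrightarrow> step_eps n (\<lambda>j. - p j) j = - step_eps n p j"
  using uminus_mod_double_sub[of "p (Suc j) - p j" "int m"] step_mod_nonzero[of j]
  unfolding step_eps_def by (simp add: n_eq)

lemma far_row_rev: "far_row n m (\<lambda>j. p (n - 1 - j))"
proof
  show "inj_on (\<lambda>j. p (n - 1 - j) mod int n) {..<n}"
  proof (rule inj_onI)
    fix i j assume ij: "i \<in> {..<n}" "j \<in> {..<n}" "p (n - 1 - i) mod int n = p (n - 1 - j) mod int n"
    then have "n - 1 - i = n - 1 - j" using inj_onD[OF residues_inj] by simp
    then show "i = j" using ij by simp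
  qed
  show "int m - 1 \<le> cdist n (p (n - 1 - j)) (p (n - 1 - Suc j))" if "Suc j < n" for j
    using step_far[of "n - 2 - j"] that
    by (simp add: cdist_commute Suc_diff_Suc numeral_2_eq_2)
qed (use n_eq m_ge in simp_all)

lemma step_eps_rev:
  "Suc j < n \<Longrightarrow> step_eps n (\<lambda>j. p (n - 1 - j)) j = - step_eps n p (n - 2 - j)"
  using uminus_mod_double_sub[of "p (Suc (n - 2 - j)) - p (n - 2 - j)" "int m"]
    step_mod_nonzero[of "n - 2 - j"]
  unfolding step_eps_def by (simp add: n_eq Suc_diff_Suc numeral_2_eq_2)

lemma no_initial_steps_pos_zero_pos:
  assumes "step_eps n p 0 = 1" "step_eps n p 1 = 0" "step_eps n p 2 = 1"
  shows False
proof -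
  define P where "P = (\<lambda>j. (p j - p 0) mod int n)"
  interpret P: residue_row n m P unfolding P_def by (rule residue_row_shift)
  have step: "step_eps n p j = e \<longleftrightarrow> P (Suc j) - P j = int m + e \<or> P (Suc j) - P j = e - int m"
    if "e \<in> {-1, 0, 1}" for j e
    using P.step_eps_eq_iff[of e j] step_eps_shift[of "p 0" j] that m_ge by (auto simp: P_def)
  define high where "high = {int m + 2 .. 2 * int m - 1}"
  have P0: "P 0 = 0" by (simp add: P_def)
  have P1: "P 1 = int m + 1" using step[of 1 0] assms(1) P0 P.nonneg[of 1] m_ge by auto
  have P2: "P 2 = 1" using step[of 0 1] assms(2) P1 P.less[of 2] m_ge
    by (auto simp: numeral_2_eq_2)
  have P3: "P 3 = int m + 2" using step[of 1 2] assms(3) P2 P.nonneg[of 3] m_ge by auto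
  have in_high: "P (3 + 2 * i) \<in> high" if "3 + 2 * i < n" for i
    using that
  proof (induction i)
    case 0
    then show ?case using P3 m_ge by (simp add: high_def)
  next
    case (Suc i)
    define j where "j = 3 + 2 * i"
    have "P j \<in> high" using Suc by (simp add: j_def)
    moreover have "P (Suc j) \<noteq> P 2" "P (Suc (Suc j)) \<notin> {P 0, P 1, P 2}"
      using inj_onD[OF P.inj] Suc.prems by (fastforce simp: j_def)+
    moreover have "near_antipodal (int m) (P j) (P (Suc j))"
      "near_antipodal (int m) (P (Suc j)) (P (Suc (Suc j)))"
      using P.far[of j] P.far[of "Suc j"] Suc.prems by (simp_all add: j_def)
    ultimately have "P (Suc (Suc j)) \<in> high"
      using P0 P1 P2 P.nonneg[of "Suc (Suc j)"] P.less[of "Suc j"] P.less[of "Suc (Suc j)"]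
      unfolding high_def near_antipodal_def by (auto simp: abs_if split: if_splits)
    then show ?case by (simp add: j_def)
  qed
  have "card {..<m - 1} \<le> card high"
  proof (rule card_inj_on_le)
    show "inj_on (\<lambda>i. P (3 + 2 * i)) {..<m - 1}"
    proof (rule inj_onI)
      fix i i' assume "i \<in> {..<m - 1}" "i' \<in> {..<m - 1}" "P (3 + 2 * i) = P (3 + 2 * i')"
      then have "3 + 2 * i = 3 + 2 * i'" by (intro inj_onD[OF P.inj]) (auto simp: n_eq)
      then show "i = i'" by simp
    qed
    show "(\<lambda>i. P (3 + 2 * i)) ` {..<m - 1} \<subseteq> high"
      using in_high by (auto simp: n_eq)
  qed (simp add: high_def)
  then show False using m_ge by (simp add: high_def)
qed

lemma no_initial_steps_neg_zero_neg:
  assumes "step_eps n p 0 = -1" "step_eps n p 1 = 0" "step_eps n p 2 = -1"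
  shows False
proof -
  interpret reflected: far_row n m "\<lambda>j. - p j" by (rule far_row_uminus)
  show False
  proof (rule reflected.no_initial_steps_pos_zero_pos)
    show "step_eps n (\<lambda>j. - p j) 0 = 1" "step_eps n (\<lambda>j. - p j) 1 = 0"
      "step_eps n (\<lambda>j. - p j) 2 = 1"
      using step_eps_uminus[of 0] step_eps_uminus[of 1] step_eps_uminus[of 2] assms m_ge
      by (simp_all add: n_eq)
  qed
qed

end

locale far_rows = p: far_row n m p + q: far_row n m q
  for n m :: nat and p q :: "nat \<Rightarrow> int" +
  assumes vertical_far: "j < n \<Longrightarrow> int m - 1 \<le> cdist n (p j) (q j)"
begin

lemma residue_rows_shift:
  "residue_rows n m (\<lambda>j. (p j - c) mod int n) (\<lambda>j. (q j - c) mod int n)"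
proof (intro residue_rows.intro residue_rows_axioms.intro p.residue_row_shift q.residue_row_shift)
  show "near_antipodal (int m) ((p j - c) mod int n) ((q j - c) mod int n)" if "j < n" for j
    using vertical_far[OF that] cdist_mod_shift[of n "p j" "q j" c]
      cdist_residues_ge_iff[of "(p j - c) mod int n" m "(q j - c) mod int n"] p.m_ge
    by (simp add: p.n_eq)
qed

lemma far_rows_swap: "far_rows n m q p"
  by (intro far_rows.intro far_rows_axioms.intro q.far_row_axioms p.far_row_axioms)
    (simp add: vertical_far cdist_commute)

lemma far_rows_rev: "far_rows n m (\<lambda>j. p (n - 1 - j)) (\<lambda>j. q (n - 1 - j))"
  by (intro far_rows.intro far_rows_axioms.intro p.far_row_rev q.far_row_rev)
    (simp add: vertical_far)

lemma no_crossing_interior: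
  assumes "step_eps n p k = 1" "step_eps n q k = -1" "0 < k" "k + 3 < n"
  shows False
proof -
  define P Q where "P = (\<lambda>j. (p j - p k) mod int n)" and "Q = (\<lambda>j. (q j - p k) mod int n)"
  interpret residue_rows n m P Q unfolding P_def Q_def by (rule residue_rows_shift)
  have crossing: "step_eps n P k = 1" "step_eps n Q k = -1" "P k = 0"
    using assms p.step_eps_shift q.step_eps_shift by (simp_all add: P_def Q_def)
  have "Suc k < n" "Suc (Suc k) < n" using assms(4) by simp_all
  note around = crossing_residues[OF crossing this(1)]
    crossing_residues_left[OF crossing this(1) assms(3)]
    crossing_residues_right[OF crossing this(2)]
  define k3 where "k3 = Suc (Suc (Suc k))"
  have "k3 < n" "k3 \<noteq> k - 1" "k3 \<noteq> Suc k" using assms(4) by (auto simp: k3_def)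
  then have "P k3 \<notin> {P (k - 1), P (Suc k)}" "Q k3 \<notin> {Q (k - 1), Q (Suc k)}"
    using inj_onD[OF P.inj] inj_onD[OF Q.inj] assms(4) by auto
  moreover have "near_antipodal (int m) (P (Suc (Suc k))) (P k3)"
    "near_antipodal (int m) (Q (Suc (Suc k))) (Q k3)" "near_antipodal (int m) (P k3) (Q k3)"
    using P.far Q.far vertical \<open>k3 < n\<close> by (simp_all add: k3_def)
  ultimately show False
    using around P.nonneg[of k3] P.less[of k3] Q.nonneg[of k3] Q.less[of k3] P.m_ge
    unfolding near_antipodal_def by (auto simp: abs_if split: if_splits)
qed

lemma no_crossing_initial:
  assumes "step_eps n p 0 = 1" "step_eps n q 0 = -1"
  shows False
proof -
  define P Q where "P = (\<lambda>j. (p j - p 0) mod int n)" and "Q = (\<lambda>j. (q j - p 0) mod int n)"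
  interpret residue_rows n m P Q unfolding P_def Q_def by (rule residue_rows_shift)
  have step_P: "step_eps n p j = e \<longleftrightarrow> P (Suc j) - P j = int m + e \<or> P (Suc j) - P j = e - int m"
    and step_Q: "step_eps n q j = e \<longleftrightarrow> Q (Suc j) - Q j = int m + e \<or> Q (Suc j) - Q j = e - int m"
    if "e \<in> {-1, 0, 1}" for j e
    using P.step_eps_eq_iff[of e j] Q.step_eps_eq_iff[of e j] p.step_eps_shift q.step_eps_shift
      that P.m_ge by (auto simp: P_def Q_def)
  have "step_eps n P 0 = 1" "step_eps n Q 0 = -1" "P 0 = 0"
    using assms p.step_eps_shift q.step_eps_shift by (simp_all add: P_def Q_def)
  note start = crossing_residues_initial[OF this]
  consider "P 3 = int m + 2" | "Q 3 = 2 * int m - 1" | "P 3 = int m" "Q 3 = 1"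
    using start(5) by blast
  then show False
  proof cases
    case 1
    then show False using p.no_initial_steps_pos_zero_pos assms(1) start(1,3)
      step_P[of 0 1] step_P[of 1 2] by (simp add: eval_nat_numeral)
  next
    case 2
    then show False using q.no_initial_steps_neg_zero_neg assms(2) start(2,4)
      step_Q[of 0 1] step_Q[of "-1" 2] by (simp add: eval_nat_numeral)
  next
    case 3
    interpret swapped: far_rows n m q p by (rule far_rows_swap)
    show False
    proof (rule swapped.no_crossing_interior)
      show "step_eps n q 2 = 1" "step_eps n p 2 = -1"
        using 3 start(3,4) step_Q[of 1 2] step_P[of "-1" 2] by (simp_all add: eval_nat_numeral)
      show "0 < (2::nat)" "2 + 3 < n" using P.n_eq P.m_ge by simp_all
    qed
  qed
qed

lemma no_crossing:
  assumes "Suc k < n"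
  shows "\<not> (step_eps n p k = 1 \<and> step_eps n q k = -1)"
proof
  assume crossing: "step_eps n p k = 1 \<and> step_eps n q k = -1"
  interpret mirrored: far_rows n m "\<lambda>j. q (n - 1 - j)" "\<lambda>j. p (n - 1 - j)"
    by (rule far_rows.far_rows_rev[OF far_rows_swap])
  have "n - 2 - (n - 2 - k) = k" using assms by simp
  then have mirrored_crossing:
    "step_eps n (\<lambda>j. q (n - 1 - j)) (n - 2 - k) = 1" "step_eps n (\<lambda>j. p (n - 1 - j)) (n - 2 - k) = -1"
    using q.step_eps_rev[of "n - 2 - k"] p.step_eps_rev[of "n - 2 - k"] crossing assms by simp_all
  consider "k = 0" | "0 < k" "k + 3 < n" | "n - 2 - k = 0" | "0 < n - 2 - k" "n - 2 - k + 3 < n"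
    using assms p.n_eq p.m_ge by linarith
  then show False
  proof cases
    case 1
    then show False using no_crossing_initial crossing by simp
  next
    case 2
    then show False using no_crossing_interior crossing by blast
  next
    case 3
    then show False using mirrored.no_crossing_initial mirrored_crossing by simp
  next
    case 4
    then show False using mirrored.no_crossing_interior[OF mirrored_crossing] by blast
  qed
qed

end

lemma ext_diff_row_nth: "j < n - 1 \<Longrightarrow> ext_diff_row n s ! j = step_eps n ((!) s) j"
  unfolding ext_diff_row_def step_eps_def by (simp add: nth_append)

lemma rect_inner_dist_le_horizontal:
  assumes "i < length M" "Suc j < n"
  shows "rect_inner_dist n M \<le> cdist n (M ! i ! j) (M ! i ! Suc j)"
  unfolding rect_inner_dist_def using assms by (intro Min_le finite_UnI finite_image_set2) (auto intro: finite_subset[of _ "{..<n}"] finite_subset[of _ "{..<length M}"])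

lemma rect_inner_dist_le_vertical:
  assumes "Suc i < length M" "j < n"
  shows "rect_inner_dist n M \<le> cdist n (M ! i ! j) (M ! Suc i ! j)"
  unfolding rect_inner_dist_def using assms by (intro Min_le finite_UnI finite_image_set2) (auto intro: finite_subset[of _ "{..<n}"] finite_subset[of _ "{..<length M}"])

lemma latin_row_residues_inj:
  assumes "latin_row n r"
  shows "inj_on (\<lambda>j. r ! j mod int n) {..<n}"
proof (rule inj_onI)
  fix i j assume ij: "i \<in> {..<n}" "j \<in> {..<n}" "r ! i mod int n = r ! j mod int n"
  have "r ! i \<in> {1..int n}" "r ! j \<in> {1..int n}"
    using assms ij(1,2) unfolding latin_row_def by (metis lessThan_iff nth_mem)+
  then have "r ! i = r ! j" using mod_eq_imp_eq_interval[OF ij(3), of 1] by simp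
  then show "i = j" using assms ij(1,2) unfolding latin_row_def by (simp add: nth_eq_iff_index_eq)
qed

lemma neighbors_far_rows:
  assumes "n = 2 * m" "3 \<le> m" "neighbors n d d'"
  obtains r r' where "far_rows n m ((!) r) ((!) r')" "ext_diff_row n r = d" "ext_diff_row n r' = d'"
proof -
  obtain r r' where rows: "latin_row n r" "latin_row n r'"
    and diffs: "ext_diff_row n r = d" "ext_diff_row n r' = d'"
    and dist: "rect_inner_dist n [r, r'] = int m - 1"
    using assms(1,3) unfolding neighbors_def by auto
  have "far_rows n m ((!) r) ((!) r')"
  proof (intro far_rows.intro far_row.intro far_rows_axioms.intro assms(1,2) latin_row_residues_inj rows)
    show "int m - 1 \<le> cdist n (r ! j) (r ! Suc j)" "int m - 1 \<le> cdist n (r' ! j) (r' ! Suc j)"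
      if "Suc j < n" for j
      using rect_inner_dist_le_horizontal[of 0 "[r, r']" j n] rect_inner_dist_le_horizontal[of 1 "[r, r']" j n]
        dist that by simp_all
    show "int m - 1 \<le> cdist n (r ! j) (r' ! j)" if "j < n" for j
      using rect_inner_dist_le_vertical[of 0 "[r, r']" j n] dist that by simp
  qed
  then show thesis using that diffs by blast
qed

theorem mainTheorem17:
  fixes n :: nat and d d' :: "int list" and j :: nat
  assumes "n \<ge> 6" and "even n"
    and "neighbors n d d'"
    and "1 \<le> j" and "j \<le> n - 1"
  shows "\<not> (d ! (j - 1) = 1 \<and> d' ! (j - 1) = -1) \<and> \<not> (d ! (j - 1) = -1 \<and> d' ! (j - 1) = 1)"
proof -
  obtain m where n_eq: "n = 2 * m" using assms(2) by blast
  have "3 \<le> m" using assms(1) n_eq by simp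
  then obtain r r' where rows: "far_rows n m ((!) r) ((!) r')"
    and diffs: "ext_diff_row n r = d" "ext_diff_row n r' = d'"
    using neighbors_far_rows n_eq assms(3) by metis
  have "j - 1 < n - 1" "Suc (j - 1) < n" using assms(4,5) by auto
  then have "d ! (j - 1) = step_eps n ((!) r) (j - 1)" "d' ! (j - 1) = step_eps n ((!) r') (j - 1)"
    using diffs ext_diff_row_nth by auto
  then show ?thesis
    using far_rows.no_crossing[OF rows] far_rows.no_crossing[OF far_rows.far_rows_swap[OF rows]]
      \<open>Suc (j - 1) < n\<close> by auto
qed

end
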